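(* Let $n\geq2$, let $\lambda_1,\dots,\lambda_n\geq 0$ with $\sum_{i=1}^n\lambda_i=1$, let $\rho>0$ and let $z$ be a harmonic function in a neighborhood of the ball $B_\rho(0)\subset\mathbb{R}^n$ satisfying $z(0)=0$, $\nabla z(0)=0$, $D^2z(0)=0$. If the function $$w(x)=\sqrt{\tfrac12\sum_{i=1}^n\lambda_i x_i^2+z(x)}$$ is (well defined and) convex in $B_\rho(0)$, then $z\equiv 0$. *)

theory Defs
  imports "HOL-Analysis.Analysis"
begin

definition grad :: "(real^'n \<Rightarrow> real) \<Rightarrow> real^'n \<Rightarrow> real^'n" where
  "grad f x = (\<chi> i. frechet_derivative f (at x) (axis i 1))"

definition hess :: "(real^'n \<Rightarrow> real) \<Rightarrow> real^'n \<Rightarrow> real^'n^'n" where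
  "hess f x = (\<chi> i j. frechet_derivative (grad f) (at x) (axis j 1) $ i)"

definition laplacian :: "(real^'n \<Rightarrow> real) \<Rightarrow> real^'n \<Rightarrow> real" where
  "laplacian f x = (\<Sum>i\<in>UNIV. hess f x $ i $ i)"

definition harmonic_on :: "(real^'n \<Rightarrow> real) \<Rightarrow> (real^'n) set \<Rightarrow> bool" where
  "harmonic_on f S \<longleftrightarrow> open S \<and> f differentiable_on S \<and> grad f differentiable_on S
     \<and> continuous_on S (hess f) \<and> (\<forall>x\<in>S. laplacian f x = 0)"

end

theory Submission
  imports Defs
begin

text \<open>
  Write \<open>Q x = (1/2) \<Sum>\<^sub>i \<lambda>\<^sub>i x\<^sub>i\<^sup>2\<close>. Since \<open>w(0) = 0\<close>, convexity gives \<open>w(t x) \<le> t w(x)\<close> for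
  \<open>0 \<le> t \<le> 1\<close>, and squaring and cancelling the 2-homogeneous \<open>Q\<close> leaves \<open>z(t x) \<le> t\<^sup>2 z(x)\<close>.
  If \<open>z(x) < 0\<close>, the function \<open>t \<mapsto> z(t x) - z(x) t\<^sup>2/2\<close> has vanishing first and positive second
  derivative at \<open>0\<close>, so it is positive for small \<open>t > 0\<close>, while the bound makes it negative.
  Hence \<open>z \<ge> 0\<close> with \<open>z(0) = 0\<close>, and the strong minimum principle forces \<open>z = 0\<close>.

  The minimum principle is derived from Hopf's boundary point lemma, proved with the barrier
  \<open>exp (-\<alpha> |x - q|\<^sup>2)\<close>: if \<open>z > 0\<close> somewhere, take the last zero \<open>p\<close> on the segment from \<open>0\<close> to
  that point and a ball around a later point of the segment touching \<open>p\<close>; Hopf's lemma gives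
  \<open>\<nabla>z(p) \<noteq> 0\<close>, although \<open>p\<close> is an interior minimum of \<open>z\<close>.
\<close>

lemma second_deriv_pos_imp_eventually_gt_right:
  fixes g g' :: "real \<Rightarrow> real"
  assumes deriv: "\<forall>\<^sub>F t in nhds 0. (g has_real_derivative g' t) (at t)"
    and deriv2: "(g' has_real_derivative a) (at 0)" and "g' 0 = 0" and "a > 0"
  shows "\<forall>\<^sub>F t in at_right 0. g 0 < g t"
proof -
  obtain \<delta> where "\<delta> > 0" and \<delta>: "\<And>t. \<bar>t\<bar> < \<delta> \<Longrightarrow> (g has_real_derivative g' t) (at t)"
    using deriv unfolding eventually_nhds_metric dist_real_def by auto
  obtain e where "e > 0" and e: "\<And>h. 0 < h \<Longrightarrow> h < e \<Longrightarrow> 0 < g' h"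
    using DERIV_pos_inc_right[OF deriv2 \<open>a > 0\<close>] \<open>g' 0 = 0\<close> by auto
  show ?thesis unfolding eventually_at_right_field
  proof (intro exI[of _ "min e \<delta>"] conjI allI impI)
    show "0 < min e \<delta>" using \<open>e > 0\<close> \<open>\<delta> > 0\<close> by simp
    fix t :: real assume "0 < t" "t < min e \<delta>"
    then obtain \<xi> where \<xi>: "0 < \<xi>" "\<xi> < t" and mvt: "g t - g 0 = (t - 0) * g' \<xi>"
      using MVT2[of 0 t g g'] \<delta> by force
    have "0 < (t - 0) * g' \<xi>"
      using e \<xi> \<open>0 < t\<close> \<open>t < min e \<delta>\<close> by (intro mult_pos_pos) auto
    then show "g 0 < g t" using mvt by linarith
  qed
qed

lemma right_local_min_imp_deriv_nonneg:
  fixes f :: "real \<Rightarrow> real"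
  assumes deriv: "(f has_real_derivative l) (at x)" and min: "\<forall>\<^sub>F t in at_right x. f x \<le> f t"
  shows "0 \<le> l"
proof (rule ccontr)
  assume "\<not> 0 \<le> l"
  then obtain d where "d > 0" and "\<forall>h>0. h < d \<longrightarrow> f (x + h) < f x"
    using DERIV_neg_dec_right[OF deriv] by force
  then have "\<forall>\<^sub>F t in at_right x. f t < f x"
    unfolding eventually_at_right_field
    by (intro exI[of _ "x + d"]) (auto dest: spec[of _ "_ - x"])
  with min have "\<forall>\<^sub>F t in at_right x. False"
    by eventually_elim simp
  then show False by simp
qed

lemma local_min_imp_second_deriv_nonneg:
  fixes g g' :: "real \<Rightarrow> real"
  assumes deriv: "\<forall>\<^sub>F t in nhds 0. (g has_real_derivative g' t) (at t)"
    and deriv2: "(g' has_real_derivative a) (at 0)"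
    and min: "\<forall>\<^sub>F t in nhds 0. g 0 \<le> g t"
  shows "0 \<le> a"
proof (rule ccontr)
  assume "\<not> 0 \<le> a"
  obtain \<delta> where "\<delta> > 0" and "\<forall>t. \<bar>0 - t\<bar> < \<delta> \<longrightarrow> g 0 \<le> g t"
    using min unfolding eventually_nhds_metric dist_real_def by auto
  then have "g' 0 = 0"
    using DERIV_local_min eventually_nhds_x_imp_x[OF deriv] by blast
  have "\<forall>\<^sub>F t in at_right 0. - g 0 < - g t"
    by (rule second_deriv_pos_imp_eventually_gt_right[where g' = "\<lambda>t. - g' t" and a = "- a"])
       (use deriv deriv2 \<open>g' 0 = 0\<close> \<open>\<not> 0 \<le> a\<close> in \<open>auto elim!: eventually_mono intro: DERIV_minus\<close>)
  moreover have "\<forall>\<^sub>F t in at_right 0. g 0 \<le> g t"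
    using filter_leD[OF at_within_le_nhds min] .
  ultimately have "\<forall>\<^sub>F t in at_right (0::real). False"
    by eventually_elim simp
  then show False by simp
qed

lemma eventually_nhds_along_line:
  fixes y d :: "'a::real_normed_vector"
  assumes "\<forall>\<^sub>F x in nhds y. P x"
  shows "\<forall>\<^sub>F t in nhds 0. P (y + t *\<^sub>R d)"
proof -
  have "((\<lambda>t. y + t *\<^sub>R d) \<longlongrightarrow> y + 0 *\<^sub>R d) (nhds 0)"
    by (intro tendsto_intros filterlim_ident)
  with assms show ?thesis by (auto intro: eventually_compose_filterlim)
qed

lemma has_real_derivative_along_line:
  fixes f :: "'a::real_normed_vector \<Rightarrow> real"
  assumes "(f has_derivative D) (at (y + t *\<^sub>R d))"
  shows "((\<lambda>s. f (y + s *\<^sub>R d)) has_real_derivative D d) (at t)"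
proof -
  have "((\<lambda>s. y + s *\<^sub>R d) has_derivative (\<lambda>s. s *\<^sub>R d)) (at t)"
    by (auto intro!: derivative_eq_intros)
  from diff_chain_at[OF this assms]
  have "((\<lambda>s. f (y + s *\<^sub>R d)) has_derivative (\<lambda>s. D (s *\<^sub>R d))) (at t)"
    by (simp add: o_def)
  moreover have "(\<lambda>s. D (s *\<^sub>R d)) = (*) (D d)"
    using linear_scale[OF has_derivative_linear[OF assms]] by (auto simp: fun_eq_iff)
  ultimately show ?thesis by (simp add: has_field_derivative_def)
qed

lemma linear_eq_sum_axis:
  fixes f :: "real^'n \<Rightarrow> 'b::real_vector"
  assumes "linear f"
  shows "f v = (\<Sum>j\<in>UNIV. v $ j *\<^sub>R f (axis j 1))"
proof -
  have "f v = f (\<Sum>j\<in>UNIV. v $ j *\<^sub>R axis j 1)"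
    using basis_expansion[of v] by (simp add: scalar_mult_eq_scaleR)
  also have "\<dots> = (\<Sum>j\<in>UNIV. v $ j *\<^sub>R f (axis j 1))"
    by (simp add: linear_sum[OF assms] linear_scale[OF assms])
  finally show ?thesis .
qed

lemma frechet_derivative_eq_inner_grad:
  fixes u :: "real^'n \<Rightarrow> real"
  assumes "u differentiable at x"
  shows "frechet_derivative u (at x) v = grad u x \<bullet> v"
proof -
  have lin: "linear (frechet_derivative u (at x))"
    using frechet_derivative_works[THEN iffD1, OF assms] by (rule has_derivative_linear)
  have "frechet_derivative u (at x) v = (\<Sum>j\<in>UNIV. v $ j * frechet_derivative u (at x) (axis j 1))"
    using linear_eq_sum_axis[OF lin, of v] by (simp only: real_scaleR_def)
  also have "\<dots> = grad u x \<bullet> v"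
    unfolding grad_def inner_vec_def by (simp add: mult.commute)
  finally show ?thesis .
qed

lemma frechet_derivative_grad_eq_hess:
  fixes u :: "real^'n \<Rightarrow> real"
  assumes "grad u differentiable at x"
  shows "frechet_derivative (grad u) (at x) v = hess u x *v v"
proof -
  have "linear (frechet_derivative (grad u) (at x))"
    using frechet_derivative_works[THEN iffD1, OF assms] by (rule has_derivative_linear)
  then have "frechet_derivative (grad u) (at x) v = (\<Sum>j\<in>UNIV. v $ j *\<^sub>R frechet_derivative (grad u) (at x) (axis j 1))"
    by (rule linear_eq_sum_axis)
  also have "\<dots> = hess u x *v v"
    unfolding hess_def matrix_vector_mult_def by (simp add: vec_eq_iff mult.commute)
  finally show ?thesis .
qed

lemma has_real_derivative_line_grad:
  fixes u :: "real^'n \<Rightarrow> real"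
  assumes "u differentiable at (y + t *\<^sub>R d)"
  shows "((\<lambda>s. u (y + s *\<^sub>R d)) has_real_derivative grad u (y + t *\<^sub>R d) \<bullet> d) (at t)"
  using has_real_derivative_along_line[OF frechet_derivative_works[THEN iffD1, OF assms]]
  by (simp add: frechet_derivative_eq_inner_grad[OF assms])

lemma has_real_derivative_line_hess:
  fixes u :: "real^'n \<Rightarrow> real"
  assumes "grad u differentiable at (y + t *\<^sub>R d)"
  shows "((\<lambda>s. grad u (y + s *\<^sub>R d) \<bullet> d) has_real_derivative (hess u (y + t *\<^sub>R d) *v d) \<bullet> d) (at t)"
proof -
  have "((\<lambda>x. grad u x \<bullet> d) has_derivative (\<lambda>v. frechet_derivative (grad u) (at (y + t *\<^sub>R d)) v \<bullet> d))
      (at (y + t *\<^sub>R d))"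
    using frechet_derivative_works[THEN iffD1, OF assms] by (rule has_derivative_inner_left)
  from has_real_derivative_along_line[OF this]
  show ?thesis by (simp add: frechet_derivative_grad_eq_hess[OF assms])
qed

lemma eventually_has_real_derivative_line_grad:
  fixes u :: "real^'n \<Rightarrow> real"
  assumes "open S" "y \<in> S" "u differentiable_on S"
  shows "\<forall>\<^sub>F t in nhds 0.
    ((\<lambda>s. u (y + s *\<^sub>R d)) has_real_derivative grad u (y + t *\<^sub>R d) \<bullet> d) (at t)"
  using eventually_nhds_along_line[OF eventually_nhds_in_open[OF assms(1,2)], of d]
proof eventually_elim
  case (elim t)
  then show ?case
    using assms(1,3) differentiable_on_eq_differentiable_at has_real_derivative_line_grad by blast
qed

lemma local_min_along_line_imp_hess_ge:
  fixes u :: "real^'n \<Rightarrow> real" and \<phi> \<phi>' :: "real \<Rightarrow> real"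
  assumes "open S" "y \<in> S" "u differentiable_on S" "grad u differentiable at y"
    and \<phi>: "\<forall>\<^sub>F t in nhds 0. (\<phi> has_real_derivative \<phi>' t) (at t)"
    and \<phi>': "(\<phi>' has_real_derivative b) (at 0)"
    and min: "\<forall>\<^sub>F t in nhds 0. u y - \<phi> 0 \<le> u (y + t *\<^sub>R d) - \<phi> t"
  shows "b \<le> (hess u y *v d) \<bullet> d"
proof -
  define g where "g t = u (y + t *\<^sub>R d) - \<phi> t" for t
  define g' where "g' t = grad u (y + t *\<^sub>R d) \<bullet> d - \<phi>' t" for t
  have "\<forall>\<^sub>F t in nhds 0. (g has_real_derivative g' t) (at t)"
    using eventually_has_real_derivative_line_grad[OF assms(1-3), of d] \<phi>
    unfolding g_def g'_def by eventually_elim (rule DERIV_diff)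
  moreover have "(g' has_real_derivative (hess u y *v d) \<bullet> d - b) (at 0)"
    unfolding g'_def using has_real_derivative_line_hess[of u y 0 d] assms(4) \<phi>'
    by (auto intro: DERIV_diff)
  moreover have "\<forall>\<^sub>F t in nhds 0. g 0 \<le> g t"
    using min by (simp add: g_def)
  ultimately show ?thesis
    using local_min_imp_second_deriv_nonneg by fastforce
qed

lemma grad_eq_0_at_local_min:
  fixes u :: "real^'n \<Rightarrow> real"
  assumes "u differentiable at p" "\<forall>\<^sub>F x in nhds p. u p \<le> u x"
  shows "grad u p = 0"
proof -
  have "frechet_derivative u (at p) = (\<lambda>h. 0)"
    using has_derivative_local_min[OF frechet_derivative_works[THEN iffD1, OF assms(1)]]
      filter_leD[OF at_within_le_nhds assms(2)] .
  then show ?thesis by (simp add: grad_def vec_eq_iff)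
qed

lemma norm_add_scaleR_axis_power2:
  fixes v :: "real^'n"
  shows "(norm (v + t *\<^sub>R axis i 1))\<^sup>2 = (norm v)\<^sup>2 + 2 * t * v $ i + t\<^sup>2"
  by (simp only: power2_norm_eq_inner)
     (simp add: inner_add_left inner_add_right inner_axis inner_axis' inner_commute power2_eq_square algebra_simps)

lemma hess_diag_ge_at_local_min_minus_gaussian:
  fixes u :: "real^'n \<Rightarrow> real"
  assumes "open S" "y \<in> S" "u differentiable_on S" "grad u differentiable at y"
    and min: "\<forall>\<^sub>F x in nhds y.
      u y - \<epsilon> * exp (- \<alpha> * (norm (y - q))\<^sup>2) \<le> u x - \<epsilon> * exp (- \<alpha> * (norm (x - q))\<^sup>2)"
  shows "\<epsilon> * exp (- \<alpha> * (norm (y - q))\<^sup>2) * (4 * \<alpha>\<^sup>2 * ((y - q) $ i)\<^sup>2 - 2 * \<alpha>) \<le> hess u y $ i $ i"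
proof -
  define r2 where "r2 = (norm (y - q))\<^sup>2"
  define c where "c = (y - q) $ i"
  define \<phi> where "\<phi> t = \<epsilon> * exp (- \<alpha> * (r2 + 2 * t * c + t\<^sup>2))" for t
  define \<phi>' where "\<phi>' t = \<epsilon> * (exp (- \<alpha> * (r2 + 2 * t * c + t\<^sup>2)) * (- \<alpha> * (2 * c + 2 * t)))" for t
  have \<phi>: "(\<phi> has_real_derivative \<phi>' t) (at t)" for t
    unfolding \<phi>_def \<phi>'_def
    by (rule derivative_eq_intros refl | simp add: algebra_simps)+
  have \<phi>': "(\<phi>' has_real_derivative \<epsilon> * exp (- \<alpha> * r2) * (4 * \<alpha>\<^sup>2 * c\<^sup>2 - 2 * \<alpha>)) (at 0)"
    unfolding \<phi>'_def
    by (rule derivative_eq_intros refl | simp add: algebra_simps power2_eq_square)+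
  have "(norm (y + t *\<^sub>R axis i 1 - q))\<^sup>2 = r2 + 2 * t * c + t\<^sup>2" for t
    using norm_add_scaleR_axis_power2[of "y - q" t i] by (simp add: r2_def c_def algebra_simps)
  then have min_line: "\<forall>\<^sub>F t in nhds 0. u y - \<phi> 0 \<le> u (y + t *\<^sub>R axis i 1) - \<phi> t"
    using eventually_nhds_along_line[OF min, of "axis i 1"] by (simp add: \<phi>_def r2_def)
  have "\<epsilon> * exp (- \<alpha> * r2) * (4 * \<alpha>\<^sup>2 * c\<^sup>2 - 2 * \<alpha>) \<le> (hess u y *v axis i 1) \<bullet> axis i 1"
    by (rule local_min_along_line_imp_hess_ge[OF assms(1-4) always_eventually \<phi>' min_line])
       (use \<phi> in blast)
  then show ?thesis
    by (simp add: r2_def c_def matrix_vector_mult_basis column_def inner_axis)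
qed

lemma harmonic_minus_gaussian_no_local_min:
  fixes u :: "real^'n \<Rightarrow> real"
  assumes harm: "harmonic_on u S" and "y \<in> S" and "\<epsilon> > 0"
    and big: "real CARD('n) < 2 * \<alpha> * (norm (y - q))\<^sup>2"
  shows "\<not> (\<forall>\<^sub>F x in nhds y.
    u y - \<epsilon> * exp (- \<alpha> * (norm (y - q))\<^sup>2) \<le> u x - \<epsilon> * exp (- \<alpha> * (norm (x - q))\<^sup>2))"
proof
  assume min: "\<forall>\<^sub>F x in nhds y.
    u y - \<epsilon> * exp (- \<alpha> * (norm (y - q))\<^sup>2) \<le> u x - \<epsilon> * exp (- \<alpha> * (norm (x - q))\<^sup>2)"
  have S: "open S" "u differentiable_on S" "grad u differentiable at y" "laplacian u y = 0"
    using harm \<open>y \<in> S\<close> differentiable_on_eq_differentiable_at unfolding harmonic_on_def by auto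
  define r2 where "r2 = (norm (y - q))\<^sup>2"
  define E where "E = \<epsilon> * exp (- \<alpha> * r2)"
  \<comment> \<open>The Gaussian has Laplacian \<open>exp (-\<alpha> r2) (4 \<alpha>\<^sup>2 r2 - 2 \<alpha> n) > 0\<close> at \<open>y\<close>, whereas at a
     local minimum of \<open>u - \<epsilon> exp (-\<alpha> |x - q|\<^sup>2)\<close> with \<open>u\<close> harmonic it would be \<open>\<le> 0\<close>.\<close>
  have "\<alpha> > 0"
    using big by (smt (verit) of_nat_0_le_iff mult_nonpos_nonneg zero_le_power2)
  have "(\<Sum>i\<in>UNIV. ((y - q) $ i)\<^sup>2) = r2"
    unfolding r2_def power2_norm_eq_inner inner_vec_def by (simp add: power2_eq_square)
  then have "(\<Sum>i\<in>UNIV. E * (4 * \<alpha>\<^sup>2 * ((y - q) $ i)\<^sup>2 - 2 * \<alpha>))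
      = E * (4 * \<alpha>\<^sup>2 * r2 - 2 * \<alpha> * real CARD('n))"
    by (simp add: sum_subtractf sum_distrib_left[symmetric] mult.assoc)
  also have "\<dots> = E * (2 * \<alpha>) * (2 * \<alpha> * r2 - real CARD('n))"
    by (simp add: algebra_simps power2_eq_square)
  also have "\<dots> > 0"
    using \<open>\<epsilon> > 0\<close> \<open>\<alpha> > 0\<close> big by (simp add: E_def r2_def)
  also have "(\<Sum>i\<in>UNIV. E * (4 * \<alpha>\<^sup>2 * ((y - q) $ i)\<^sup>2 - 2 * \<alpha>)) \<le> laplacian u y"
    unfolding laplacian_def E_def r2_def
    by (intro sum_mono hess_diag_ge_at_local_min_minus_gaussian[OF S(1) \<open>y \<in> S\<close> S(2,3) min])
  finally show False using S(4) by simp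
qed

lemma harmonic_minus_gaussian_min_principle_annulus:
  fixes u :: "real^'n \<Rightarrow> real"
  assumes harm: "harmonic_on u S" and "cball q R \<subseteq> S" and "\<epsilon> > 0" and "0 < r"
    and big: "real CARD('n) < 2 * \<alpha> * r\<^sup>2"
    and boundary: "\<And>x. norm (x - q) = r \<or> norm (x - q) = R \<Longrightarrow>
      k \<le> u x - \<epsilon> * exp (- \<alpha> * (norm (x - q))\<^sup>2)"
    and x: "r \<le> norm (x - q)" "norm (x - q) \<le> R"
  shows "k \<le> u x - \<epsilon> * exp (- \<alpha> * (norm (x - q))\<^sup>2)"
proof -
  define h where "h x = u x - \<epsilon> * exp (- \<alpha> * (norm (x - q))\<^sup>2)" for x
  define K where "K = cball q R - ball q r"
  have K_iff: "x \<in> K \<longleftrightarrow> r \<le> norm (x - q) \<and> norm (x - q) \<le> R" for x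
    by (auto simp: K_def dist_norm norm_minus_commute)
  have "K \<subseteq> S" using \<open>cball q R \<subseteq> S\<close> K_def by auto
  have "continuous_on S u"
    using harm differentiable_imp_continuous_on unfolding harmonic_on_def by blast
  then have "continuous_on K h"
    unfolding h_def by (intro continuous_intros continuous_on_subset[OF _ \<open>K \<subseteq> S\<close>])
  moreover have "compact K" by (auto simp: K_def intro: compact_diff)
  moreover have "x \<in> K" using x K_iff by blast
  ultimately obtain y where "y \<in> K" and y_min: "\<forall>x\<in>K. h y \<le> h x"
    using continuous_attains_inf[of K h] by blast
  have "k \<le> h y"
  proof (cases "norm (y - q) = r \<or> norm (y - q) = R")
    case True
    then show ?thesis using boundary by (simp add: h_def)
  next
    case False
    then have y_inner: "y \<in> ball q R - cball q r"
      using \<open>y \<in> K\<close> by (auto simp: K_iff dist_norm norm_minus_commute)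
    have "ball q R - cball q r \<subseteq> K" by (auto simp: K_def)
    moreover have "\<forall>\<^sub>F x in nhds y. x \<in> ball q R - cball q r"
      using y_inner by (intro eventually_nhds_in_open) auto
    ultimately have "\<forall>\<^sub>F x in nhds y. h y \<le> h x"
      using y_min by (auto elim!: eventually_mono)
    moreover have "real CARD('n) < 2 * \<alpha> * (norm (y - q))\<^sup>2"
    proof -
      have "\<alpha> > 0"
        using big by (smt (verit) of_nat_0_le_iff mult_nonpos_nonneg zero_le_power2)
      moreover have "r\<^sup>2 \<le> (norm (y - q))\<^sup>2" using \<open>y \<in> K\<close> \<open>0 < r\<close> K_iff by (simp add: power_mono)
      ultimately show ?thesis using big by (smt (verit) mult_left_mono)
    qed
    ultimately show ?thesis
      using harmonic_minus_gaussian_no_local_min[OF harm _ \<open>\<epsilon> > 0\<close>] \<open>y \<in> K\<close> \<open>K \<subseteq> S\<close>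
      unfolding h_def by blast
  qed
  then show ?thesis using y_min \<open>x \<in> K\<close> by (force simp: h_def)
qed

lemma harmonic_ge_hopf_barrier:
  fixes u :: "real^'n \<Rightarrow> real"
  assumes harm: "harmonic_on u S" and "cball q R \<subseteq> S" and nonneg: "\<forall>x\<in>cball q R. 0 \<le> u x"
    and "0 < u q" and "0 < R"
  obtains \<epsilon> \<alpha> r where "0 < \<epsilon>" "0 < \<alpha>" "0 < r" "r < R"
    "\<And>x. r \<le> norm (x - q) \<Longrightarrow> norm (x - q) \<le> R \<Longrightarrow>
      \<epsilon> * (exp (- \<alpha> * (norm (x - q))\<^sup>2) - exp (- \<alpha> * R\<^sup>2)) \<le> u x"
proof -
  define \<epsilon> where "\<epsilon> = u q / 2"
  have "\<epsilon> > 0" using \<open>0 < u q\<close> by (simp add: \<epsilon>_def)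
  obtain r where "0 < r" "r < R" and near_q: "\<And>x. norm (x - q) \<le> r \<Longrightarrow> \<epsilon> \<le> u x"
  proof -
    have "q \<in> S" using \<open>cball q R \<subseteq> S\<close> \<open>0 < R\<close> by auto
    then have "continuous (at q) u"
      using harm differentiable_imp_continuous_within differentiable_on_eq_differentiable_at
      unfolding harmonic_on_def by blast
    then have "\<forall>\<^sub>F x in nhds q. \<epsilon> < u x"
      unfolding continuous_at tendsto_at_iff_tendsto_nhds
      by (rule order_tendstoD(1)) (simp add: \<epsilon>_def \<open>0 < u q\<close>)
    then obtain \<delta> where "\<delta> > 0" and \<delta>: "\<And>x. dist x q \<le> \<delta> \<Longrightarrow> \<epsilon> < u x"
      unfolding eventually_nhds_metric_le by auto
    show thesis
      by (rule that[of "min \<delta> (R / 2)"]) (use \<open>\<delta> > 0\<close> \<open>0 < R\<close> \<delta> in \<open>auto simp: dist_norm less_imp_le\<close>)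
  qed
  define \<alpha> where "\<alpha> = real CARD('n) / r\<^sup>2 + 1"
  have "2 * \<alpha> * r\<^sup>2 = 2 * real CARD('n) + 2 * r\<^sup>2"
    using \<open>0 < r\<close> by (simp add: \<alpha>_def field_simps)
  then have big: "real CARD('n) < 2 * \<alpha> * r\<^sup>2"
    using \<open>0 < r\<close> by (simp add: add_pos_nonneg)
  have "0 < \<alpha>" by (simp add: \<alpha>_def add_nonneg_pos)
  show thesis
  proof (rule that[OF \<open>\<epsilon> > 0\<close> \<open>0 < \<alpha>\<close> \<open>0 < r\<close> \<open>r < R\<close>])
    fix x assume x: "r \<le> norm (x - q)" "norm (x - q) \<le> R"
    have "- \<epsilon> * exp (- \<alpha> * R\<^sup>2) \<le> u x - \<epsilon> * exp (- \<alpha> * (norm (x - q))\<^sup>2)"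
    proof (rule harmonic_minus_gaussian_min_principle_annulus[OF harm \<open>cball q R \<subseteq> S\<close> \<open>\<epsilon> > 0\<close> \<open>0 < r\<close> big _ x])
      fix x assume "norm (x - q) = r \<or> norm (x - q) = R"
      then show "- \<epsilon> * exp (- \<alpha> * R\<^sup>2) \<le> u x - \<epsilon> * exp (- \<alpha> * (norm (x - q))\<^sup>2)"
      proof
        assume "norm (x - q) = r"
        moreover have "\<epsilon> * exp (- \<alpha> * r\<^sup>2) \<le> \<epsilon>"
          using \<open>0 < \<alpha>\<close> \<open>\<epsilon> > 0\<close> by (intro mult_left_le) auto
        moreover have "0 < \<epsilon> * exp (- \<alpha> * R\<^sup>2)" using \<open>\<epsilon> > 0\<close> by simp
        ultimately show ?thesis using near_q[of x] by simp
      next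
        assume "norm (x - q) = R"
        then show ?thesis using nonneg by (simp add: dist_norm norm_minus_commute)
      qed
    qed
    then show "\<epsilon> * (exp (- \<alpha> * (norm (x - q))\<^sup>2) - exp (- \<alpha> * R\<^sup>2)) \<le> u x"
      by (simp add: algebra_simps)
  qed
qed

lemma hopf_lemma:
  fixes u :: "real^'n \<Rightarrow> real"
  assumes harm: "harmonic_on u S" and "cball q R \<subseteq> S" and "\<forall>x\<in>cball q R. 0 \<le> u x"
    and "0 < u q" and pq: "norm (p - q) = R" and "u p = 0"
  shows "0 < grad u p \<bullet> (q - p)"
proof -
  have "0 < R" using pq \<open>u p = 0\<close> \<open>0 < u q\<close> by auto
  obtain \<epsilon> \<alpha> r where "0 < \<epsilon>" "0 < \<alpha>" "0 < r" "r < R" and barrier: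
    "\<And>x. r \<le> norm (x - q) \<Longrightarrow> norm (x - q) \<le> R \<Longrightarrow>
      \<epsilon> * (exp (- \<alpha> * (norm (x - q))\<^sup>2) - exp (- \<alpha> * R\<^sup>2)) \<le> u x"
    using harmonic_ge_hopf_barrier[OF assms(1-4) \<open>0 < R\<close>] by blast
  define C where "C = exp (- \<alpha> * R\<^sup>2)"
  define f where "f t = u (p + t *\<^sub>R (q - p)) - \<epsilon> * (exp (- \<alpha> * ((1 - t)\<^sup>2 * R\<^sup>2)) - C)" for t
  have "f 0 \<le> f t" if "0 < t" "t < 1 - r / R" for t
  proof -
    have "0 < r / R" using \<open>0 < r\<close> \<open>0 < R\<close> by simp
    have "p + t *\<^sub>R (q - p) - q = (1 - t) *\<^sub>R (p - q)" by (simp add: algebra_simps)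
    then have "norm (p + t *\<^sub>R (q - p) - q) = (1 - t) * R"
      using that pq \<open>0 < r / R\<close> by simp
    moreover have "r \<le> (1 - t) * R" using that \<open>0 < R\<close> by (simp add: field_simps)
    ultimately show ?thesis
      using barrier[of "p + t *\<^sub>R (q - p)"] that \<open>0 < R\<close> \<open>u p = 0\<close>
      by (simp add: f_def C_def power_mult_distrib)
  qed
  then have "\<forall>\<^sub>F t in at_right 0. f 0 \<le> f t"
    unfolding eventually_at_right_field using \<open>r < R\<close> \<open>0 < R\<close>
    by (intro exI[of _ "1 - r / R"]) auto
  moreover have "(f has_real_derivative grad u p \<bullet> (q - p) - \<epsilon> * (C * (2 * \<alpha> * R\<^sup>2))) (at 0)"
  proof -
    have "p \<in> S" using \<open>cball q R \<subseteq> S\<close> pq by (auto simp: dist_norm norm_minus_commute)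
    then have "u differentiable at (p + 0 *\<^sub>R (q - p))"
      using harm differentiable_on_eq_differentiable_at unfolding harmonic_on_def by auto
    from has_real_derivative_line_grad[OF this]
    have "((\<lambda>t. u (p + t *\<^sub>R (q - p))) has_real_derivative grad u p \<bullet> (q - p)) (at 0)" by simp
    moreover have "((\<lambda>t. \<epsilon> * (exp (- \<alpha> * ((1 - t)\<^sup>2 * R\<^sup>2)) - C)) has_real_derivative
        \<epsilon> * (C * (2 * \<alpha> * R\<^sup>2))) (at 0)"
      by (rule derivative_eq_intros refl | simp add: C_def algebra_simps power2_eq_square)+
    ultimately show ?thesis unfolding f_def by (rule DERIV_diff)
  qed
  ultimately have "0 \<le> grad u p \<bullet> (q - p) - \<epsilon> * (C * (2 * \<alpha> * R\<^sup>2))"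
    using right_local_min_imp_deriv_nonneg by blast
  moreover have "0 < \<epsilon> * (C * (2 * \<alpha> * R\<^sup>2))"
    using \<open>0 < \<epsilon>\<close> \<open>0 < \<alpha>\<close> \<open>0 < R\<close> by (simp add: C_def)
  ultimately show ?thesis by linarith
qed

lemma last_zero_on_interval:
  fixes f :: "real \<Rightarrow> real"
  assumes "a \<le> b" "continuous_on {a..b} f" "f a = 0" "f b \<noteq> 0"
  obtains t where "a \<le> t" "t < b" "f t = 0" "\<And>s. t < s \<Longrightarrow> s \<le> b \<Longrightarrow> f s \<noteq> 0"
proof -
  define T where "T = {a..b} \<inter> f -` {0}"
  have "closed T"
    unfolding T_def using assms(2) by (rule continuous_closed_preimage) auto
  then have "compact T"
    by (simp add: compact_eq_bounded_closed T_def bounded_Int)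
  moreover have "a \<in> T" using assms(1,3) by (simp add: T_def)
  ultimately obtain t where "t \<in> T" and t_max: "\<forall>s\<in>T. s \<le> t"
    using compact_attains_sup by (metis empty_iff)
  show thesis
  proof (rule that)
    show "a \<le> t" "f t = 0" using \<open>t \<in> T\<close> by (auto simp: T_def)
    show "t < b" using \<open>t \<in> T\<close> assms(4) by (auto simp: T_def less_le)
    show "f s \<noteq> 0" if "t < s" "s \<le> b" for s
    proof
      assume "f s = 0"
      then have "s \<in> T" using that \<open>a \<le> t\<close> by (simp add: T_def)
      then show False using t_max \<open>t < s\<close> by force
    qed
  qed
qed

lemma harmonic_nonneg_vanishing_at_center_imp_zero:
  fixes u :: "real^'n \<Rightarrow> real"
  assumes harm: "harmonic_on u S" and "ball 0 \<rho> \<subseteq> S" and nonneg: "\<forall>x\<in>ball 0 \<rho>. 0 \<le> u x"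
    and "u 0 = 0" and x0: "x0 \<in> ball 0 \<rho>"
  shows "u x0 = 0"
proof (rule ccontr)
  assume "u x0 \<noteq> 0"
  have on_segment: "t *\<^sub>R x0 \<in> ball 0 \<rho>" if "0 \<le> t" "t \<le> 1" for t
    using x0 that mult_left_le_one_le[of "norm x0" t] by simp
  have "continuous_on S u"
    using harm differentiable_imp_continuous_on unfolding harmonic_on_def by blast
  then have "continuous_on {0..1} (\<lambda>t. u (t *\<^sub>R x0))"
    by (rule continuous_on_compose2) (use on_segment \<open>ball 0 \<rho> \<subseteq> S\<close> in \<open>auto intro!: continuous_intros\<close>)
  then obtain ts where "0 \<le> ts" "ts < 1" "u (ts *\<^sub>R x0) = 0"
    and after_ts: "\<And>s. ts < s \<Longrightarrow> s \<le> 1 \<Longrightarrow> u (s *\<^sub>R x0) \<noteq> 0"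
    using last_zero_on_interval[of 0 1 "\<lambda>t. u (t *\<^sub>R x0)"] \<open>u 0 = 0\<close> \<open>u x0 \<noteq> 0\<close> by auto
  define s where "s = (1 + ts) / 2"
  define p where "p = ts *\<^sub>R x0"
  define q where "q = s *\<^sub>R x0"
  define R where "R = (s - ts) * norm x0"
  have "ts < s" "s \<le> 1" using \<open>ts < 1\<close> by (auto simp: s_def)
  have "0 < u q"
  proof -
    have "u q \<noteq> 0" using after_ts \<open>ts < s\<close> \<open>s \<le> 1\<close> by (simp add: q_def)
    moreover have "q \<in> ball 0 \<rho>" using on_segment \<open>0 \<le> ts\<close> \<open>ts < s\<close> \<open>s \<le> 1\<close> by (simp add: q_def)
    ultimately show ?thesis using nonneg by force
  qed
  have "norm (p - q) = R"
  proof -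
    have "p - q = (ts - s) *\<^sub>R x0" by (simp add: p_def q_def algebra_simps)
    then show ?thesis using \<open>ts < s\<close> by (simp add: R_def)
  qed
  have "cball q R \<subseteq> ball 0 \<rho>"
  proof
    fix y assume "y \<in> cball q R"
    then have "norm y \<le> norm q + R"
      using norm_triangle_ineq[of q "y - q"] by (simp add: dist_norm norm_minus_commute)
    also have "\<dots> = norm x0"
      using \<open>0 \<le> ts\<close> \<open>ts < s\<close> by (simp add: q_def R_def s_def field_simps)
    finally show "y \<in> ball 0 \<rho>" using x0 by simp
  qed
  then have "0 < grad u p \<bullet> (q - p)"
    using hopf_lemma[OF harm _ _ \<open>0 < u q\<close> \<open>norm (p - q) = R\<close>] \<open>ball 0 \<rho> \<subseteq> S\<close> nonneg
      \<open>u (ts *\<^sub>R x0) = 0\<close> by (auto simp: p_def)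
  moreover have "grad u p = 0"
  proof (rule grad_eq_0_at_local_min)
    have "p \<in> ball 0 \<rho>" using on_segment \<open>0 \<le> ts\<close> \<open>ts < 1\<close> by (simp add: p_def)
    then show "u differentiable at p"
      using harm \<open>ball 0 \<rho> \<subseteq> S\<close> differentiable_on_eq_differentiable_at
      unfolding harmonic_on_def by blast
    show "\<forall>\<^sub>F x in nhds p. u p \<le> u x"
      using eventually_nhds_in_open[OF open_ball \<open>p \<in> ball 0 \<rho>\<close>] nonneg \<open>u (ts *\<^sub>R x0) = 0\<close>
      by (auto simp: p_def elim!: eventually_mono)
  qed
  ultimately show False by simp
qed

lemma convex_sqrt_ray_bound:
  fixes F :: "'a::real_normed_vector \<Rightarrow> real"
  assumes cvx: "convex_on S (\<lambda>x. sqrt (F x))" and "0 \<in> S" "x \<in> S" "F 0 = 0"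
    and "0 \<le> F x" and t: "0 \<le> t" "t \<le> 1"
  shows "F (t *\<^sub>R x) \<le> t\<^sup>2 * F x"
proof -
  have "sqrt (F (t *\<^sub>R x)) \<le> t * sqrt (F x)"
    using convex_onD[OF cvx t \<open>0 \<in> S\<close> \<open>x \<in> S\<close>] \<open>F 0 = 0\<close> by simp
  then have "F (t *\<^sub>R x) \<le> (t * sqrt (F x))\<^sup>2"
    by (rule sqrt_le_D)
  then show ?thesis using \<open>0 \<le> F x\<close> by (simp add: power_mult_distrib)
qed

lemma nonneg_of_flat_and_ray_bound:
  fixes z :: "real^'n \<Rightarrow> real"
  assumes "open S" "0 \<in> S" "z differentiable_on S" "grad z differentiable at 0"
    and "z 0 = 0" "grad z 0 = 0" "hess z 0 = 0"
    and ray: "\<And>t. 0 \<le> t \<Longrightarrow> t \<le> 1 \<Longrightarrow> z (t *\<^sub>R x) \<le> t\<^sup>2 * z x"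
  shows "0 \<le> z x"
proof (rule ccontr)
  assume "\<not> 0 \<le> z x"
  define c where "c = z x"
  have "c < 0" using \<open>\<not> 0 \<le> z x\<close> by (simp add: c_def)
  define g where "g t = z (t *\<^sub>R x) - c / 2 * t\<^sup>2" for t
  define g' where "g' t = grad z (t *\<^sub>R x) \<bullet> x - c * t" for t
  have "\<forall>\<^sub>F t in nhds 0. (g has_real_derivative g' t) (at t)"
    using eventually_has_real_derivative_line_grad[OF assms(1-3), of x]
  proof eventually_elim
    case (elim t)
    then show ?case
      unfolding g_def g'_def by (auto intro!: derivative_eq_intros)
  qed
  moreover have "(g' has_real_derivative - c) (at 0)"
    using has_real_derivative_line_hess[of z 0 0 x] assms(4,7)
    unfolding g'_def by (auto intro!: derivative_eq_intros)
  moreover have "g' 0 = 0" using assms(6) by (simp add: g'_def)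
  ultimately have "\<forall>\<^sub>F t in at_right 0. g 0 < g t"
    using second_deriv_pos_imp_eventually_gt_right \<open>c < 0\<close> by force
  moreover have "\<forall>\<^sub>F t in at_right 0. g t < 0"
    unfolding eventually_at_right_field
  proof (intro exI[of _ 1] conjI allI impI)
    fix t :: real assume "0 < t" "t < 1"
    then have "z (t *\<^sub>R x) \<le> t\<^sup>2 * c" using ray[of t] by (simp add: c_def)
    then have "g t \<le> c / 2 * t\<^sup>2" by (simp add: g_def algebra_simps)
    also have "\<dots> < 0" using \<open>c < 0\<close> \<open>0 < t\<close> by (simp add: mult_neg_pos)
    finally show "g t < 0" .
  qed simp
  ultimately have "\<forall>\<^sub>F t in at_right (0::real). False"
    by eventually_elim (use \<open>z 0 = 0\<close> in \<open>simp add: g_def\<close>)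
  then show False by simp
qed

theorem lemma2p1:
  fixes lam :: "'n::finite \<Rightarrow> real" and \<rho> :: real and z :: "real^'n \<Rightarrow> real"
  assumes "CARD('n) \<ge> 2"
    and "\<forall>i. lam i \<ge> 0" and "(\<Sum>i\<in>UNIV. lam i) = 1"
    and "\<rho> > 0"
    and "\<exists>S. open S \<and> ball 0 \<rho> \<subseteq> S \<and> harmonic_on z S"
    and "z 0 = 0" and "grad z 0 = 0" and "hess z 0 = 0"
    and "\<forall>x\<in>ball 0 \<rho>. (1/2) * (\<Sum>i\<in>UNIV. lam i * (x $ i)^2) + z x \<ge> 0"
    and "convex_on (ball 0 \<rho>) (\<lambda>x. sqrt ((1/2) * (\<Sum>i\<in>UNIV. lam i * (x $ i)^2) + z x))"
  shows "\<forall>x\<in>ball 0 \<rho>. z x = 0"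
proof
  obtain S where "ball 0 \<rho> \<subseteq> S" and harm: "harmonic_on z S" using assms(5) by blast
  define P where "P x = (1/2) * (\<Sum>i\<in>UNIV. lam i * (x $ i)^2)" for x :: "real^'n"
  have P_scale: "P (t *\<^sub>R x) = t\<^sup>2 * P x" for t x
    by (simp add: P_def power_mult_distrib sum_distrib_left algebra_simps)
  have "0 \<le> z x" if x: "x \<in> ball 0 \<rho>" for x
  proof (rule nonneg_of_flat_and_ray_bound[where S = S])
    show "open S" "z differentiable_on S"
      using harm unfolding harmonic_on_def by auto
    show "0 \<in> S" using \<open>ball 0 \<rho> \<subseteq> S\<close> \<open>\<rho> > 0\<close> by auto
    then show "grad z differentiable at 0"
      using harm differentiable_on_eq_differentiable_at unfolding harmonic_on_def by blast
    fix t :: real assume t: "0 \<le> t" "t \<le> 1"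
    have "P (t *\<^sub>R x) + z (t *\<^sub>R x) \<le> t\<^sup>2 * (P x + z x)"
      by (rule convex_sqrt_ray_bound[where F = "\<lambda>y. P y + z y", OF _ _ x _ _ t])
         (use assms(4,6,9,10) x in \<open>simp_all add: P_def\<close>)
    then show "z (t *\<^sub>R x) \<le> t\<^sup>2 * z x" by (simp add: P_scale algebra_simps)
  qed (use assms(6-8) in auto)
  then show "z x = 0" if "x \<in> ball 0 \<rho>" for x
    using harmonic_nonneg_vanishing_at_center_imp_zero[OF harm \<open>ball 0 \<rho> \<subseteq> S\<close> _ assms(6) that] by blast
qed

end
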